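(* For integers $m\ge1$, $1\le i\le m$ and $n\ge0$, $$\sum_{\lambda\vdash n}X_{m,i}(\lambda)=\sum_{k\ge1}p(n-k)\sum_{d\mid k}\left\lfloor\frac{d+m-i}{m}\right\rfloor,$$ where the left sum is over all partitions $\lambda$ of $n$, $p$ is the partition function, and $p(N)=0$ for $N<0$.
   Context: For a partition $\lambda:\ n=\lambda_1+\dots+\lambda_k$ with $\lambda_1\ge\dots\ge\lambda_k\ge1$, $X_{m,i}(\lambda)=\sum_{j\equiv i\pmod m}\lambda_j$, the sum of the parts whose index is congruent to $i$ modulo $m$. *)

theory Defs
  imports Main
begin

text \<open>A partition of n: a list of positive parts in nonincreasing order
  (lambda_1 >= lambda_2 >= ... >= lambda_k >= 1) summing to n.
  List position j (0-based) holds part lambda_(j+1).\<close>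
definition is_partition :: "nat \<Rightarrow> nat list \<Rightarrow> bool" where
  "is_partition n xs \<longleftrightarrow> sorted_wrt (\<ge>) xs \<and> (\<forall>x\<in>set xs. 1 \<le> x) \<and> sum_list xs = n"

definition partitions :: "nat \<Rightarrow> nat list set" where
  "partitions n = {xs. is_partition n xs}"

definition part_count :: "nat \<Rightarrow> nat" where
  "part_count n = card (partitions n)"

definition p_int :: "int \<Rightarrow> nat" where
  "p_int N = (if N < 0 then 0 else part_count (nat N))"

definition X :: "nat \<Rightarrow> nat \<Rightarrow> nat list \<Rightarrow> nat" where
  "X m i xs = (\<Sum>j\<in>{j. 1 \<le> j \<and> j \<le> length xs \<and> j mod m = i mod m}. xs ! (j - 1))"

end

theory Submission
  imports Defs "HOL-Library.Multiset" "HOL-Library.More_List"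
begin

text \<open>Count the cells of the Ferrers diagram of a partition that lie in the rows \<open>j\<close> with
  \<open>j mod m = i mod m\<close>. Row by row this is \<open>X m i\<close>; column by column it is the sum of
  \<open>g L = (L + m - i) div m\<close> over the parts \<open>L\<close> of the conjugate partition, since \<open>g L\<close> counts
  the admissible rows \<open>j \<le> L\<close>. Conjugation permutes the partitions of \<open>n\<close>, so the left side is
  the sum over \<open>d\<close> of \<open>g d\<close> times the total multiplicity of the part \<open>d\<close> in all partitions
  of \<open>n\<close>. Removing \<open>c\<close> copies of \<open>d\<close> matches the partitions of \<open>n\<close> with at least \<open>c\<close> parts
  equal to \<open>d\<close> with the partitions of \<open>n - c d\<close>, so that multiplicity is the sum of
  \<open>p (n - c d)\<close> over \<open>c \<ge> 1\<close>; putting \<open>k = c d\<close> gives the right side.\<close>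

lemma is_partition_altdef:
  "is_partition n xs \<longleftrightarrow> sorted_wrt (\<ge>) xs \<and> 0 \<notin> set xs \<and> sum_list xs = n"
  unfolding is_partition_def by (auto simp: Suc_le_eq) (metis gr0I)

definition parts_greater :: "nat list \<Rightarrow> nat \<Rightarrow> nat" where
  "parts_greater xs t = length (filter (\<lambda>x. t < x) xs)"

definition conjugate :: "nat list \<Rightarrow> nat list" where
  "conjugate xs = map (parts_greater xs) [0..<Max (insert 0 (set xs))]"

definition ferrers :: "nat list \<Rightarrow> (nat \<times> nat) set" where
  "ferrers xs = {(a, t). t < nth_default 0 xs a}"

lemma nth_default_conjugate: "nth_default 0 (conjugate xs) t = parts_greater xs t"
  by (auto simp: nth_default_def conjugate_def parts_greater_def filter_empty_conv not_less)

lemma less_nth_default_iff_less_parts_greater: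
  assumes "sorted_wrt (\<ge>) xs"
  shows "t < nth_default 0 xs a \<longleftrightarrow> a < parts_greater xs t"
  using assms
proof (induction xs arbitrary: a)
  case Nil
  then show ?case by (simp add: parts_greater_def)
next
  case (Cons x xs)
  show ?case
  proof (cases "t < x")
    case True
    with Cons show ?thesis by (cases a) (simp_all add: parts_greater_def)
  next
    case False
    with Cons.prems have small: "\<forall>y\<in>set (x # xs). y \<le> t" by auto
    have "nth_default 0 (x # xs) a \<in> insert 0 (set (x # xs))"
      by (metis range_nth_default rangeI)
    with small have "nth_default 0 (x # xs) a \<le> t" by auto
    moreover have "parts_greater (x # xs) t = 0"
      using small by (simp add: parts_greater_def filter_empty_conv not_less)
    ultimately show ?thesis by simp
  qed
qed

lemma ferrers_conjugate:
  assumes "sorted_wrt (\<ge>) xs"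
  shows "ferrers (conjugate xs) = prod.swap ` ferrers xs"
proof -
  have "(b, a) \<in> ferrers (conjugate xs) \<longleftrightarrow> (a, b) \<in> ferrers xs" for a b
    by (simp add: ferrers_def nth_default_conjugate less_nth_default_iff_less_parts_greater[OF assms])
  then show ?thesis
    by (auto intro: rev_image_eqI)
qed

lemma nth_default_eq_card_ferrers: "nth_default 0 xs a = card {t. (a, t) \<in> ferrers xs}"
  by (simp add: ferrers_def)

lemma sorted_conjugate: "sorted_wrt (\<ge>) (conjugate xs)"
proof -
  have "parts_greater xs u \<le> parts_greater xs t" if "t \<le> u" for t u
    unfolding parts_greater_def using that by (induction xs) auto
  then show ?thesis by (simp add: conjugate_def sorted_wrt_map sorted_wrt_iff_nth_less)
qed

lemma zero_notin_conjugate: "0 \<notin> set (conjugate xs)"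
  by (auto simp: conjugate_def parts_greater_def filter_empty_conv Max_gr_iff)

lemma nth_default_zero_inject:
  assumes "0 \<notin> set xs" "0 \<notin> set ys" "nth_default 0 xs = nth_default 0 ys"
  shows "xs = ys"
proof -
  have "no_trailing ((=) 0) xs" "no_trailing ((=) 0) ys"
    using assms(1,2) last_in_set by (fastforce simp: no_trailing_unfold)+
  with assms(3) show ?thesis by (metis nth_default_eq_iff strip_while_idem)
qed

lemma conjugate_conjugate:
  assumes "sorted_wrt (\<ge>) xs" "0 \<notin> set xs"
  shows "conjugate (conjugate xs) = xs"
proof (rule nth_default_zero_inject)
  have "ferrers (conjugate (conjugate xs)) = ferrers xs"
    by (simp add: ferrers_conjugate sorted_conjugate assms(1) image_image)
  then show "nth_default 0 (conjugate (conjugate xs)) = nth_default 0 xs"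
    by (simp add: fun_eq_iff nth_default_eq_card_ferrers)
qed (use assms zero_notin_conjugate in auto)

lemma card_ferrers_filter:
  "card {(a, t) \<in> ferrers xs. P a t} = (\<Sum>a<length xs. card {t. t < xs ! a \<and> P a t})"
proof -
  have "{(a, t) \<in> ferrers xs. P a t} = (SIGMA a:{..<length xs}. {t. t < xs ! a \<and> P a t})"
    by (auto simp: ferrers_def nth_default_def split: if_splits)
  then show ?thesis by simp
qed

lemma sum_list_eq_card_ferrers: "sum_list xs = card (ferrers xs)"
  using card_ferrers_filter[of xs "\<lambda>_ _. True"] by (simp add: sum_list_sum_nth atLeast0LessThan)

lemma sum_list_conjugate:
  assumes "sorted_wrt (\<ge>) xs"
  shows "sum_list (conjugate xs) = sum_list xs"
  by (simp add: sum_list_eq_card_ferrers ferrers_conjugate[OF assms] card_image)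

lemma is_partition_conjugate: "is_partition n xs \<Longrightarrow> is_partition n (conjugate xs)"
  by (simp add: is_partition_altdef sorted_conjugate zero_notin_conjugate sum_list_conjugate)

lemma bij_betw_conjugate: "bij_betw conjugate (partitions n) (partitions n)"
proof -
  have involution: "\<forall>xs\<in>partitions n. conjugate (conjugate xs) = xs"
    by (simp add: partitions_def is_partition_altdef conjugate_conjugate)
  have closed: "conjugate ` partitions n \<subseteq> partitions n"
    by (auto simp: partitions_def is_partition_conjugate)
  show ?thesis
    by (rule bij_betw_byWitness[OF involution involution closed closed])
qed

lemma sum_rows_eq_sum_list_conjugate:
  assumes "sorted_wrt (\<ge>) xs"
  shows "(\<Sum>a | a < length xs \<and> P a. xs ! a) = (\<Sum>y\<leftarrow>conjugate xs. card {a. a < y \<and> P a})"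
proof -
  have "(\<Sum>a | a < length xs \<and> P a. xs ! a) = card {(a, t) \<in> ferrers xs. P a}"
  proof -
    have "card {t. t < xs ! a \<and> P a} = (if P a then xs ! a else 0)" for a
      by simp
    then show ?thesis
      by (simp add: card_ferrers_filter sum.inter_filter[symmetric] lessThan_def)
  qed
  also have "\<dots> = card (prod.swap ` {(a, t) \<in> ferrers xs. P a})"
    by (simp add: card_image)
  also have "prod.swap ` {(a, t) \<in> ferrers xs. P a} = {(t, a) \<in> ferrers (conjugate xs). P a}"
    by (auto simp: ferrers_conjugate[OF assms])
  also have "card \<dots> = (\<Sum>y\<leftarrow>conjugate xs. card {a. a < y \<and> P a})"
    by (simp add: card_ferrers_filter sum_list_sum_nth atLeast0LessThan)
  finally show ?thesis .
qed

lemma dvd_add_diff_iff_mod_eq: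
  fixes x m i :: nat
  assumes "i \<le> m"
  shows "m dvd x + (m - i) \<longleftrightarrow> x mod m = i mod m"
  using mod_eq_dvd_iff_nat[of i "x + m" m] assms by simp

lemma card_dvd_Suc_add:
  "card {a. a < L \<and> m dvd Suc a + r} = (L + r) div m - r div m"
proof (induction L)
  case 0
  then show ?case by simp
next
  case (Suc L)
  have "{a. a < Suc L \<and> m dvd Suc a + r} =
      {a. a < L \<and> m dvd Suc a + r} \<union> (if m dvd Suc L + r then {L} else {})"
    by (auto simp: less_Suc_eq)
  then have "card {a. a < Suc L \<and> m dvd Suc a + r} =
      card {a. a < L \<and> m dvd Suc a + r} + of_bool (m dvd Suc L + r)"
    by simp
  moreover have "(Suc L + r) div m = (L + r) div m + of_bool (m dvd Suc L + r)"
    by (simp add: div_Suc dvd_eq_mod_eq_0)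
  moreover have "r div m \<le> (L + r) div m"
    by (simp add: div_le_mono)
  ultimately show ?case
    using Suc.IH by simp
qed

lemma card_Suc_mod_eq:
  fixes m i :: nat
  assumes "1 \<le> i" "i \<le> m"
  shows "card {a. a < L \<and> Suc a mod m = i mod m} = (L + m - i) div m"
proof -
  have "{a. a < L \<and> Suc a mod m = i mod m} = {a. a < L \<and> m dvd Suc a + (m - i)}"
    using dvd_add_diff_iff_mod_eq[OF assms(2)] by blast
  moreover have "(m - i) div m = 0"
    using assms by simp
  ultimately show ?thesis
    using card_dvd_Suc_add[of L m "m - i"] assms(2) by simp
qed

lemma X_eq_sum_rows: "X m i xs = (\<Sum>a | a < length xs \<and> Suc a mod m = i mod m. xs ! a)"
proof -
  have "(\<Sum>j | 1 \<le> j \<and> j \<le> length xs \<and> P j. xs ! (j - 1))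
      = (\<Sum>a | a < length xs \<and> P (Suc a). xs ! a)" for P
    by (rule sum.reindex_bij_witness[where i = Suc and j = "\<lambda>j. j - 1"]) auto
  then show ?thesis
    unfolding X_def .
qed

lemma X_eq_sum_list_conjugate:
  assumes "sorted_wrt (\<ge>) xs" "1 \<le> i" "i \<le> m"
  shows "X m i xs = (\<Sum>y\<leftarrow>conjugate xs. (y + m - i) div m)"
  by (simp add: X_eq_sum_rows sum_rows_eq_sum_list_conjugate[OF assms(1)]
      card_Suc_mod_eq[OF assms(2,3)])

lemma length_le_sum_list: "0 \<notin> set xs \<Longrightarrow> length xs \<le> sum_list (xs :: nat list)"
  by (induction xs) auto

lemma finite_partitions: "finite (partitions n)"
proof (rule finite_subset)
  show "partitions n \<subseteq> {xs. set xs \<subseteq> {0..n} \<and> length xs \<le> n}"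
  proof
    fix xs assume "xs \<in> partitions n"
    then have "0 \<notin> set xs" "sum_list xs = n"
      by (simp_all add: partitions_def is_partition_altdef)
    then show "xs \<in> {xs. set xs \<subseteq> {0..n} \<and> length xs \<le> n}"
      using member_le_sum_list[of _ xs] length_le_sum_list[of xs] by auto
  qed
qed (rule finite_lists_length_le; simp)

lemma rev_sorted_list_of_multiset_mset:
  assumes "sorted_wrt (\<ge>) xs"
  shows "rev (sorted_list_of_multiset (mset xs)) = xs"
proof -
  have "sort xs = rev xs"
    by (rule properties_for_sort) (simp_all add: sorted_wrt_rev assms)
  then show ?thesis by simp
qed

text \<open>Partitions as multisets of parts: adding \<open>c\<close> copies of a part becomes multiset addition.\<close>
definition partition_msets :: "nat \<Rightarrow> nat multiset set" where
  "partition_msets n = {M. 0 \<notin># M \<and> sum_mset M = n}"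

lemma bij_betw_mset_partitions: "bij_betw mset (partitions n) (partition_msets n)"
proof (rule bij_betw_imageI)
  show "inj_on mset (partitions n)"
  proof (rule inj_onI)
    fix xs ys assume "xs \<in> partitions n" "ys \<in> partitions n" "mset xs = mset ys"
    then show "xs = ys"
      using rev_sorted_list_of_multiset_mset
      by (metis partitions_def is_partition_def mem_Collect_eq)
  qed
  have "M \<in> mset ` partitions n" if "M \<in> partition_msets n" for M
  proof
    show "M = mset (rev (sorted_list_of_multiset M))" by simp
    show "rev (sorted_list_of_multiset M) \<in> partitions n"
      using that by (simp add: partitions_def partition_msets_def is_partition_altdef
          sorted_wrt_rev sum_mset_sum_list[symmetric])
  qed
  then show "mset ` partitions n = partition_msets n"
    by (auto simp: partitions_def partition_msets_def is_partition_altdef sum_mset_sum_list)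
qed

lemma finite_partition_msets: "finite (partition_msets n)"
  using bij_betw_finite[OF bij_betw_mset_partitions] finite_partitions by simp

lemma card_partition_msets: "card (partition_msets n) = part_count n"
  using bij_betw_same_card[OF bij_betw_mset_partitions] by (simp add: part_count_def)

lemma card_partition_msets_count_ge:
  fixes d c n :: nat
  assumes "0 < d" "d * c \<le> n"
  shows "card {M \<in> partition_msets n. c \<le> count M d} = part_count (n - d * c)"
proof -
  let ?D = "replicate_mset c d"
  have "{M \<in> partition_msets n. c \<le> count M d} = (\<lambda>N. ?D + N) ` partition_msets (n - d * c)"
  proof (intro equalityI subsetI)
    fix M assume M: "M \<in> {M \<in> partition_msets n. c \<le> count M d}"
    then have sub: "?D \<subseteq># M"
      by (simp add: count_le_replicate_mset_subset_eq)
    have "sum_mset (M - ?D) = n - d * c"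
      using M sub by (simp add: sum_mset_diff partition_msets_def mult.commute)
    moreover have "0 \<notin># M - ?D"
      using M by (auto simp: partition_msets_def dest: in_diffD)
    moreover have "M = ?D + (M - ?D)"
      using sub by simp
    ultimately show "M \<in> (\<lambda>N. ?D + N) ` partition_msets (n - d * c)"
      by (intro rev_image_eqI[of "M - ?D"]) (simp_all add: partition_msets_def)
  next
    fix M assume "M \<in> (\<lambda>N. ?D + N) ` partition_msets (n - d * c)"
    then show "M \<in> {M \<in> partition_msets n. c \<le> count M d}"
      using assms by (auto simp: partition_msets_def mult.commute split: if_splits)
  qed
  then show ?thesis
    by (simp add: card_image card_partition_msets)
qed

lemma count_mult_le_sum_mset: "count M d * d \<le> sum_mset M" for M :: "nat multiset"
proof -
  have "replicate_mset (count M d) d \<subseteq># M"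
    by (simp flip: count_le_replicate_mset_subset_eq)
  then obtain N where "M = replicate_mset (count M d) d + N"
    unfolding mset_subset_eq_exists_conv by auto
  then show ?thesis
    by (metis le_add1 of_nat_id sum_mset.union sum_mset_replicate_mset)
qed

lemma sum_count_partition_msets:
  fixes d n :: nat
  assumes "0 < d"
  shows "(\<Sum>M\<in>partition_msets n. count M d) = (\<Sum>c\<in>{1..n div d}. part_count (n - d * c))"
proof -
  have count_eq: "count M d = (\<Sum>c\<in>{1..n div d}. of_bool (c \<le> count M d))"
    if "M \<in> partition_msets n" for M
  proof -
    have "count M d \<le> n div d"
      using that count_mult_le_sum_mset[of M d] assms
      by (simp add: partition_msets_def less_eq_div_iff_mult_less_eq)
    then have "{1..n div d} \<inter> {c. c \<le> count M d} = {1..count M d}" by auto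
    then show ?thesis by (simp flip: sum.inter_filter)
  qed
  have "(\<Sum>M\<in>partition_msets n. count M d)
      = (\<Sum>M\<in>partition_msets n. \<Sum>c\<in>{1..n div d}. of_bool (c \<le> count M d))"
    by (rule sum.cong[OF refl count_eq])
  also have "\<dots> = (\<Sum>c\<in>{1..n div d}. \<Sum>M\<in>partition_msets n. of_bool (c \<le> count M d))"
    by (rule sum.swap)
  also have "\<dots> = (\<Sum>c\<in>{1..n div d}. part_count (n - d * c))"
  proof (rule sum.cong)
    fix c assume "c \<in> {1..n div d}"
    then have "d * c \<le> n"
      using assms by (simp add: mult.commute less_eq_div_iff_mult_less_eq)
    have "(\<Sum>M\<in>partition_msets n. of_bool (c \<le> count M d))
        = card {M \<in> partition_msets n. c \<le> count M d}"
      using finite_partition_msets by (simp add: Int_def)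
    also have "\<dots> = part_count (n - d * c)"
      using assms \<open>d * c \<le> n\<close> by (rule card_partition_msets_count_ge)
    finally show "(\<Sum>M\<in>partition_msets n. of_bool (c \<le> count M d))
        = part_count (n - d * c)" .
  qed simp
  finally show ?thesis .
qed

lemma sum_partitions_sum_list:
  fixes f :: "nat \<Rightarrow> nat"
  shows "(\<Sum>mu\<in>partitions n. \<Sum>y\<leftarrow>mu. f y)
       = (\<Sum>d\<in>{1..n}. f d * (\<Sum>c\<in>{1..n div d}. part_count (n - d * c)))"
proof -
  have "set mu \<subseteq> {1..n}" if "mu \<in> partitions n" for mu
    using that member_le_sum_list[of _ mu] by (auto simp: partitions_def is_partition_def)
  then have "(\<Sum>mu\<in>partitions n. \<Sum>y\<leftarrow>mu. f y)
      = (\<Sum>mu\<in>partitions n. \<Sum>d\<in>{1..n}. count_list mu d * f d)"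
    by (intro sum.cong[OF refl] sum_list_map_eq_sum_count2) simp_all
  also have "\<dots> = (\<Sum>d\<in>{1..n}. f d * (\<Sum>mu\<in>partitions n. count (mset mu) d))"
    by (subst sum.swap) (simp add: sum_distrib_left count_mset mult.commute)
  also have "\<dots> = (\<Sum>d\<in>{1..n}. f d * (\<Sum>M\<in>partition_msets n. count M d))"
    using sum.reindex_bij_betw[OF bij_betw_mset_partitions, of "\<lambda>M. count M _"] by simp
  finally show ?thesis
    by (simp add: sum_count_partition_msets)
qed

lemma sum_divisors_eq_sum_multiples:
  fixes n :: nat
  shows "(\<Sum>k\<in>{1..n}. \<Sum>d\<in>{d. d dvd k}. F k d)
       = (\<Sum>d\<in>{1..n}. \<Sum>c\<in>{1..n div d}. F (d * c) d)"
proof -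
  have "(\<Sum>k\<in>{1..n}. \<Sum>d\<in>{d. d dvd k}. F k d)
      = (\<Sum>(k, d)\<in>(SIGMA k:{1..n}. {d. d dvd k}). F k d)"
    by (rule sum.Sigma) (auto intro: finite_divisors_nat)
  also have "\<dots> = (\<Sum>(d, c)\<in>(SIGMA d:{1..n}. {1..n div d}). F (d * c) d)"
  proof (rule sum.reindex_bij_witness[where i = "\<lambda>(d, c). (d * c, d)"
        and j = "\<lambda>(k, d). (d, k div d)"])
    show "(\<lambda>(d, c). (d * c, d)) b \<in> (SIGMA k:{1..n}. {d. d dvd k})"
      if "b \<in> (SIGMA d:{1..n}. {1..n div d})" for b
      using that by (auto simp: less_eq_div_iff_mult_less_eq mult.commute)
    show "(\<lambda>(k, d). (d, k div d)) a \<in> (SIGMA d:{1..n}. {1..n div d})"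
      if a_mem: "a \<in> (SIGMA k:{1..n}. {d. d dvd k})" for a
    proof -
      obtain k d where a: "a = (k, d)" "1 \<le> k" "k \<le> n" "d dvd k"
        using a_mem by auto
      then have "d \<le> k" "1 \<le> k div d" "k div d \<le> n div d"
        by (auto simp: dvd_imp_le div_le_mono dvd_div_eq_0_iff Suc_le_eq)
      with a show ?thesis
        by (auto simp: Suc_le_eq)
    qed
  qed auto
  also have "\<dots> = (\<Sum>d\<in>{1..n}. \<Sum>c\<in>{1..n div d}. F (d * c) d)"
    by (rule sum.Sigma[symmetric]) auto
  finally show ?thesis .
qed

theorem mainTheorem8:
  fixes m i n :: nat
  assumes "1 \<le> m" and "1 \<le> i" and "i \<le> m"
  shows "(\<Sum>lam\<in>partitions n. X m i lam)
       = (\<Sum>k\<in>{1..n}. p_int (int n - int k) *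
            (\<Sum>d\<in>{d. d dvd k}. (d + m - i) div m))"
proof -
  let ?g = "\<lambda>d. (d + m - i) div m"
  have "(\<Sum>lam\<in>partitions n. X m i lam)
      = (\<Sum>lam\<in>partitions n. \<Sum>y\<leftarrow>conjugate lam. ?g y)"
    using X_eq_sum_list_conjugate assms(2,3) by (simp add: partitions_def is_partition_def)
  also have "\<dots> = (\<Sum>mu\<in>partitions n. \<Sum>y\<leftarrow>mu. ?g y)"
    by (rule sum.reindex_bij_betw[OF bij_betw_conjugate])
  also have "\<dots> = (\<Sum>d\<in>{1..n}. \<Sum>c\<in>{1..n div d}. part_count (n - d * c) * ?g d)"
    by (simp add: sum_partitions_sum_list sum_distrib_left mult.commute)
  also have "\<dots> = (\<Sum>k\<in>{1..n}. \<Sum>d\<in>{d. d dvd k}. part_count (n - k) * ?g d)"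
    by (rule sum_divisors_eq_sum_multiples[symmetric])
  also have "\<dots> = (\<Sum>k\<in>{1..n}. p_int (int n - int k) * (\<Sum>d\<in>{d. d dvd k}. ?g d))"
    by (rule sum.cong) (auto simp: p_int_def sum_distrib_left nat_diff_distrib)
  finally show ?thesis .
qed

end
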